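(* Consider a human–algorithm system (as defined in the context) with $A\le H$, let $s$ be a weighting function for $c$, and write $s_i=s(a_i,h_i)$ and $C=\sum_{i=1}^N p_i\,c(a_i,h_i)$. Let $\epsilon_a=\max_i a_i-\min_i a_i$ and $\epsilon_h=\max_i h_i-\min_i h_i$ be the loss disparities of the algorithm and of the unaided human. If the system exhibits complementarity, then $$A-C+(H-A)\sum_{i=1}^N p_i\,s_i<\epsilon_a+\epsilon_h.$$
   Context: A human–algorithm system consists of: an integer $N\ge1$ (number of regimes); probabilities $p_1,\dots,p_N\ge 0$ with $\sum_i p_i=1$; algorithmic losses $a_1,\dots,a_N\ge 0$ and unaided-human losses $h_1,\dots,h_N\ge0$; and a combining function $c:[0,\infty)^2\to\mathbb{R}$ satisfying $\min(a,h)\le c(a,h)\le\max(a,h)$ for all $a,h\ge0$, where $c(a_i,h_i)$ is the loss of the combined system in regime $i$. Write $A=\sum_i p_i a_i$ and $H=\sum_i p_i h_i$. The system exhibits complementarity if $\sum_{i=1}^N p_i\,c(a_i,h_i)<\min(A,H)$. A weighting function for $c$ is a function $s:[0,\infty)^2\to[0,1]$ with $c(a,h)=(1-s(a,h))a+s(a,h)h$ for all $a,h\ge0$. *)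

theory Defs
  imports Main "HOL.Real"
begin

definition is_combining_function :: "(real \<Rightarrow> real \<Rightarrow> real) \<Rightarrow> bool" where
  "is_combining_function c \<longleftrightarrow>
     (\<forall>a h. a \<ge> 0 \<longrightarrow> h \<ge> 0 \<longrightarrow> min a h \<le> c a h \<and> c a h \<le> max a h)"

definition is_weighting_function ::
  "(real \<Rightarrow> real \<Rightarrow> real) \<Rightarrow> (real \<Rightarrow> real \<Rightarrow> real) \<Rightarrow> bool" where
  "is_weighting_function c s \<longleftrightarrow>
     (\<forall>a h. a \<ge> 0 \<longrightarrow> h \<ge> 0 \<longrightarrow>
        0 \<le> s a h \<and> s a h \<le> 1 \<and> c a h = (1 - s a h) * a + s a h * h)"

definition complementarity ::
  "nat \<Rightarrow> (nat \<Rightarrow> real) \<Rightarrow> (nat \<Rightarrow> real) \<Rightarrow> (nat \<Rightarrow> real) \<Rightarrow> (real \<Rightarrow> real \<Rightarrow> real) \<Rightarrow> bool" where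
  "complementarity N p a h c \<longleftrightarrow>
     (\<Sum>i=1..N. p i * c (a i) (h i))
       < min (\<Sum>i=1..N. p i * a i) (\<Sum>i=1..N. p i * h i)"

end

theory Submission
  imports Defs
begin

text \<open>Writing \<open>c(a\<^sub>i, h\<^sub>i) = a\<^sub>i + s\<^sub>i (h\<^sub>i - a\<^sub>i)\<close>, the left-hand side
  equals \<open>\<Sum> p\<^sub>i s\<^sub>i ((a\<^sub>i - A) + (H - h\<^sub>i))\<close>. Since \<open>A\<close> and \<open>H\<close> are convex
  combinations of the \<open>a\<^sub>i\<close> and \<open>h\<^sub>i\<close>, each bracket is at most
  \<open>\<epsilon>\<^sub>a + \<epsilon>\<^sub>h\<close>, so the left-hand side is at most \<open>S (\<epsilon>\<^sub>a + \<epsilon>\<^sub>h)\<close> with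
  \<open>S = \<Sum> p\<^sub>i s\<^sub>i\<close>. Complementarity forces \<open>S < 1\<close> (otherwise the system
  always follows the human and \<open>C = H\<close>) and \<open>\<epsilon>\<^sub>a + \<epsilon>\<^sub>h > 0\<close> (constant
  losses give \<open>C = c(A, H) \<ge> min A H\<close>).\<close>

lemma finite_nonempty_if_sum_eq_1:
  fixes p :: "'i \<Rightarrow> real"
  assumes "sum p I = 1"
  shows "finite I" "I \<noteq> {}"
  using assms by (auto intro: ccontr)

lemma weighted_mean_ge:
  fixes p f :: "'i \<Rightarrow> real"
  assumes "\<forall>i\<in>I. p i \<ge> 0" "sum p I = 1" "\<forall>i\<in>I. m \<le> f i"
  shows "m \<le> (\<Sum>i\<in>I. p i * f i)"
proof -
  have "m = (\<Sum>i\<in>I. p i * m)" using assms(2) by (simp add: sum_distrib_right[symmetric])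
  also have "\<dots> \<le> (\<Sum>i\<in>I. p i * f i)" using assms(1,3) by (intro sum_mono mult_left_mono) auto
  finally show ?thesis .
qed

lemma weighted_mean_le:
  fixes p f :: "'i \<Rightarrow> real"
  assumes "\<forall>i\<in>I. p i \<ge> 0" "sum p I = 1" "\<forall>i\<in>I. f i \<le> m"
  shows "(\<Sum>i\<in>I. p i * f i) \<le> m"
  using weighted_mean_ge[of I p "- m" "\<lambda>i. - f i"] assms by (simp add: sum_negf)

lemma weighted_mean_dist_le_spread:
  fixes p f :: "'i \<Rightarrow> real"
  assumes "\<forall>i\<in>I. p i \<ge> 0" "sum p I = 1" "j \<in> I"
  shows "\<bar>f j - (\<Sum>i\<in>I. p i * f i)\<bar> \<le> Max (f ` I) - Min (f ` I)"
proof -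
  have fin: "finite I" using finite_nonempty_if_sum_eq_1(1) assms(2) .
  have "Min (f ` I) \<le> (\<Sum>i\<in>I. p i * f i)" "(\<Sum>i\<in>I. p i * f i) \<le> Max (f ` I)"
    using fin assms by (auto intro!: weighted_mean_ge weighted_mean_le)
  moreover have "Min (f ` I) \<le> f j" "f j \<le> Max (f ` I)"
    using fin assms(3) by auto
  ultimately show ?thesis by linarith
qed

lemma combined_loss_eq:
  assumes "is_weighting_function c s" "a \<ge> 0" "h \<ge> 0"
  shows "c a h = a + s a h * (h - a)"
  using assms by (simp add: is_weighting_function_def algebra_simps)

lemma gain_eq_weighted_sum:
  fixes p a h w :: "'i \<Rightarrow> real"
  assumes "sum p I = 1"
  defines "A \<equiv> \<Sum>i\<in>I. p i * a i" and "H \<equiv> \<Sum>i\<in>I. p i * h i"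
  shows "A - (\<Sum>i\<in>I. p i * (a i + w i * (h i - a i))) + (H - A) * (\<Sum>i\<in>I. p i * w i)
           = (\<Sum>i\<in>I. p i * w i * ((a i - A) + (H - h i)))"
proof -
  have "(\<Sum>i\<in>I. p i * w i * ((a i - A) + (H - h i)))
          = (\<Sum>i\<in>I. p i * w i * (H - A) - p i * w i * (h i - a i))"
    by (intro sum.cong) (simp_all add: algebra_simps)
  also have "\<dots> = (\<Sum>i\<in>I. p i * w i) * (H - A) - (\<Sum>i\<in>I. p i * w i * (h i - a i))"
    by (simp add: sum_subtractf sum_distrib_right)
  moreover
  have "(\<Sum>i\<in>I. p i * (a i + w i * (h i - a i)))
          = A + (\<Sum>i\<in>I. p i * w i * (h i - a i))"
    by (simp add: A_def sum.distrib[symmetric] algebra_simps)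
  ultimately show ?thesis by (simp add: algebra_simps)
qed

lemma gain_le_weight_times_spread:
  fixes p a h w :: "'i \<Rightarrow> real"
  assumes p: "\<forall>i\<in>I. p i \<ge> 0" "sum p I = 1" and w: "\<forall>i\<in>I. w i \<ge> 0"
  defines "A \<equiv> \<Sum>i\<in>I. p i * a i" and "H \<equiv> \<Sum>i\<in>I. p i * h i"
  shows "A - (\<Sum>i\<in>I. p i * (a i + w i * (h i - a i))) + (H - A) * (\<Sum>i\<in>I. p i * w i)
           \<le> (\<Sum>i\<in>I. p i * w i) * ((Max (a ` I) - Min (a ` I)) + (Max (h ` I) - Min (h ` I)))"
    (is "_ \<le> _ * ?\<epsilon>")
proof -
  have "(\<Sum>i\<in>I. p i * w i * ((a i - A) + (H - h i))) \<le> (\<Sum>i\<in>I. p i * w i * ?\<epsilon>)"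
  proof (rule sum_mono)
    fix j assume "j \<in> I"
    then have "(a j - A) + (H - h j) \<le> ?\<epsilon>"
      using weighted_mean_dist_le_spread[OF p, of j a] weighted_mean_dist_le_spread[OF p, of j h]
      by (simp add: A_def H_def)
    moreover have "p j * w j \<ge> 0" using \<open>j \<in> I\<close> p w by simp
    ultimately show "p j * w j * ((a j - A) + (H - h j)) \<le> p j * w j * ?\<epsilon>"
      by (rule mult_left_mono)
  qed
  then show ?thesis
    using gain_eq_weighted_sum[OF p(2), where a=a and h=h and w=w]
    by (simp add: A_def H_def sum_distrib_right)
qed

lemma weight_lt_1_if_combined_below_human:
  fixes p a h w :: "'i \<Rightarrow> real"
  assumes p: "\<forall>i\<in>I. p i \<ge> 0" "sum p I = 1" and w: "\<forall>i\<in>I. w i \<le> 1"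
    and below: "(\<Sum>i\<in>I. p i * (a i + w i * (h i - a i))) < (\<Sum>i\<in>I. p i * h i)"
  shows "(\<Sum>i\<in>I. p i * w i) < 1"
proof (rule ccontr)
  assume not_lt: "\<not> ?thesis"
  have nonneg: "\<forall>i\<in>I. p i * (1 - w i) \<ge> 0" using p w by simp
  have "(\<Sum>i\<in>I. p i * (1 - w i)) = 1 - (\<Sum>i\<in>I. p i * w i)"
    using p(2) by (simp add: right_diff_distrib sum_subtractf)
  also have "\<dots> \<le> 0" using not_lt by simp
  finally have "(\<Sum>i\<in>I. p i * (1 - w i)) = 0"
    using nonneg by (intro antisym sum_nonneg) auto
  then have "\<forall>i\<in>I. p i * (1 - w i) = 0"
    using nonneg finite_nonempty_if_sum_eq_1(1)[OF p(2)] by (simp add: sum_nonneg_eq_0_iff)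
  then have "(\<Sum>i\<in>I. p i * (a i + w i * (h i - a i))) = (\<Sum>i\<in>I. p i * h i)"
    by (intro sum.cong) (auto simp: algebra_simps)
  with below show False by simp
qed

lemma spread_pos_if_combined_below_min:
  fixes p a h :: "'i \<Rightarrow> real"
  assumes p: "\<forall>i\<in>I. p i \<ge> 0" "sum p I = 1"
    and nonneg: "\<forall>i\<in>I. a i \<ge> 0" "\<forall>i\<in>I. h i \<ge> 0" and c: "is_combining_function c"
    and below: "(\<Sum>i\<in>I. p i * c (a i) (h i))
                  < min (\<Sum>i\<in>I. p i * a i) (\<Sum>i\<in>I. p i * h i)"
  shows "0 < (Max (a ` I) - Min (a ` I)) + (Max (h ` I) - Min (h ` I))"
proof (rule ccontr)
  assume no_spread: "\<not> ?thesis"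
  obtain j where "j \<in> I" using finite_nonempty_if_sum_eq_1(2)[OF p(2)] by blast
  let ?A = "\<Sum>i\<in>I. p i * a i" and ?H = "\<Sum>i\<in>I. p i * h i"
  have "a i = ?A \<and> h i = ?H" if "i \<in> I" for i
    using weighted_mean_dist_le_spread[OF p that, of a] weighted_mean_dist_le_spread[OF p that, of h]
      weighted_mean_dist_le_spread[OF p \<open>j \<in> I\<close>, of a] weighted_mean_dist_le_spread[OF p \<open>j \<in> I\<close>, of h]
      no_spread
    by linarith
  then have "\<forall>i\<in>I. min ?A ?H \<le> c (a i) (h i)"
    using c nonneg by (auto simp: is_combining_function_def)
  then have "min ?A ?H \<le> (\<Sum>i\<in>I. p i * c (a i) (h i))"
    using p by (rule weighted_mean_ge[rotated 2])
  with below show False by linarith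
qed

theorem lemma9:
  fixes N :: nat and p a h :: "nat \<Rightarrow> real" and c s :: "real \<Rightarrow> real \<Rightarrow> real"
  assumes "N \<ge> 1"
    and "\<forall>i\<in>{1..N}. p i \<ge> 0" and "(\<Sum>i=1..N. p i) = 1"
    and "\<forall>i\<in>{1..N}. a i \<ge> 0" and "\<forall>i\<in>{1..N}. h i \<ge> 0"
    and "is_combining_function c"
    and "(\<Sum>i=1..N. p i * a i) \<le> (\<Sum>i=1..N. p i * h i)"
    and "is_weighting_function c s"
    and "complementarity N p a h c"
  shows "(\<Sum>i=1..N. p i * a i) - (\<Sum>i=1..N. p i * c (a i) (h i))
           + ((\<Sum>i=1..N. p i * h i) - (\<Sum>i=1..N. p i * a i))
             * (\<Sum>i=1..N. p i * s (a i) (h i))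
         < (Max (a ` {1..N}) - Min (a ` {1..N})) + (Max (h ` {1..N}) - Min (h ` {1..N}))"
proof -
  define w where "w i = s (a i) (h i)" for i
  have w: "\<forall>i\<in>{1..N}. 0 \<le> w i \<and> w i \<le> 1"
    using assms(4,5,8) by (simp add: w_def is_weighting_function_def)
  have C: "(\<Sum>i=1..N. p i * c (a i) (h i)) = (\<Sum>i=1..N. p i * (a i + w i * (h i - a i)))"
    using assms(4,5) by (intro sum.cong) (simp_all add: w_def combined_loss_eq[OF assms(8)])
  have below: "(\<Sum>i=1..N. p i * c (a i) (h i))
                 < min (\<Sum>i=1..N. p i * a i) (\<Sum>i=1..N. p i * h i)"
    using assms(9) by (simp add: complementarity_def)
  let ?W = "\<Sum>i=1..N. p i * w i"
    and ?\<epsilon> = "(Max (a ` {1..N}) - Min (a ` {1..N})) + (Max (h ` {1..N}) - Min (h ` {1..N}))"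
  have "?W < 1"
    using w below unfolding C by (intro weight_lt_1_if_combined_below_human[OF assms(2,3)]) auto
  moreover have "0 < ?\<epsilon>"
    using spread_pos_if_combined_below_min[OF assms(2,3,4,5,6) below] .
  ultimately have "?W * ?\<epsilon> < ?\<epsilon>" by simp
  with gain_le_weight_times_spread[OF assms(2,3), where a=a and h=h and w=w] w show ?thesis
    unfolding C w_def by simp
qed

end
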